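(* Let $\{Z_t\}$ be random vectors in $\mathcal{Z}$, $\mathcal{M}$ a class of Borel functions $\mathcal{Z}\to\mathbb{R}$, $\ell:\mathcal{Z}\times\mathbb{R}\to\mathbb{R}$ Borel with $\ell(Z_t,f(Z_t))$ integrable, $\ell_t(f):=\ell(Z_t,f(Z_t))$, $Q_n(f)=\frac1n\sum_{t=1}^n\ell_t(f)$, $f_0\in\mathcal{M}$ with $E[Q_n(f_0)]\le E[Q_n(f)]$ for all $f\in\mathcal{M}$, $d_n$ a (semi-)metric on $\mathcal{M}$, $\mathcal{G}_n\subseteq\mathcal{M}$, and $\{\epsilon_n\}$ a positive sequence. Assume: (a.1) there is non-stochastic $f^*_n\in\mathcal{G}_n$ with $d_n(f_n^*,f_0)\le\epsilon_n$ for all $n$; (a.2) there are $C_1,C_2>0$ such that $C_1d_n(f,f_0)^2\le E[Q_n(f)]-E[Q_n(f_0)]\le C_2d_n(f,f_0)^2$ for all $n$ and $f\in\mathcal{G}_n$; (a.3)(iii) there are Borel $m_n:\mathcal{Z}\to[0,\infty)$, positive numbers $b_n$ and a constant $C_3>0$ with $\sup\{E[|\ell_t(f)|\mathbb{1}\{m_n(Z_t)\ge b_n\}]:f\in\mathcal{G}_n,t\in\{1,\dots,n\}\}\le C_3\epsilon_n^2$. For some $c\ge2$ let $\mathcal{H}_n\subset\mathcal{G}_n$ be such that $c\epsilon_n\le d_n(f,f_n^* )$ for each $n$ and all $f\in\mathcal{H}_n$. Then for every $n\in\mathbb{N}$, writing $\mathbb{1}_{nt}=\mathbb{1}\{m_n(Z_t)<b_n\}$,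 $$\sup_{f\in\mathcal{H}_n}\frac1n\sum_{t=1}^n[\ell_t(f_n^* )-\ell_t(f)]\mathbb{1}_{nt}\le\sup_{f\in\mathcal{H}_n}\frac1n\sum_{t=1}^n\Big\{[\ell_t(f_n^* )-\ell_t(f)]\mathbb{1}_{nt}-E\big[(\ell_t(f_n^* )-\ell_t(f))\mathbb{1}_{nt}\big]\Big\}-\big(C_1c^2/4-C_2-2C_3\big)\epsilon_n^2.$$ *)

theory Defs
  imports "HOL-Probability.Probability"
begin

definition loss :: "(nat \<Rightarrow> 'w \<Rightarrow> 'z) \<Rightarrow> ('z \<Rightarrow> real \<Rightarrow> real) \<Rightarrow> nat \<Rightarrow> ('z \<Rightarrow> real) \<Rightarrow> 'w \<Rightarrow> real"
  where "loss Z l t f \<omega> = l (Z t \<omega>) (f (Z t \<omega>))"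

definition Qn :: "(nat \<Rightarrow> 'w \<Rightarrow> 'z) \<Rightarrow> ('z \<Rightarrow> real \<Rightarrow> real) \<Rightarrow> nat \<Rightarrow> ('z \<Rightarrow> real) \<Rightarrow> 'w \<Rightarrow> real"
  where "Qn Z l n f \<omega> = (1 / real n) * (\<Sum>t = 1..n. loss Z l t f \<omega>)"

definition EQn :: "'w measure \<Rightarrow> (nat \<Rightarrow> 'w \<Rightarrow> 'z) \<Rightarrow> ('z \<Rightarrow> real \<Rightarrow> real) \<Rightarrow> nat \<Rightarrow> ('z \<Rightarrow> real) \<Rightarrow> real"
  where "EQn M Z l n f = (\<integral>\<omega>. Qn Z l n f \<omega> \<partial>M)"

definition semimetric_on :: "'a set \<Rightarrow> ('a \<Rightarrow> 'a \<Rightarrow> real) \<Rightarrow> bool"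
  where "semimetric_on S d \<longleftrightarrow>
    (\<forall>x\<in>S. d x x = 0) \<and>
    (\<forall>x\<in>S. \<forall>y\<in>S. d x y \<ge> 0 \<and> d x y = d y x) \<and>
    (\<forall>x\<in>S. \<forall>y\<in>S. \<forall>z\<in>S. d x z \<le> d x y + d y z)"

end

theory Submission
  imports Defs
begin

text \<open>
  Restricting to the event \<open>m\<^sub>n(Z\<^sub>t) < b\<^sub>n\<close> changes the expected gain of \<open>f\<^sup>*\<^sub>n\<close> over \<open>f\<close>
  by at most two tail integrals, each bounded by \<open>C\<^sub>3 \<epsilon>\<^sub>n\<^sup>2\<close> by (a.3).
  The untruncated gain \<open>E Q\<^sub>n(f\<^sup>*\<^sub>n) - E Q\<^sub>n(f)\<close> is at most \<open>C\<^sub>2 \<epsilon>\<^sub>n\<^sup>2 - C\<^sub>1 (c \<epsilon>\<^sub>n / 2)\<^sup>2\<close> by (a.2),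
  because the triangle inequality and (a.1) give \<open>d\<^sub>n(f, f\<^sub>0) \<ge> c \<epsilon>\<^sub>n - \<epsilon>\<^sub>n \<ge> c \<epsilon>\<^sub>n / 2\<close>.
  So the truncated expected gain is at most \<open>-(C\<^sub>1 c\<^sup>2/4 - C\<^sub>2 - 2 C\<^sub>3) \<epsilon>\<^sub>n\<^sup>2\<close> for every
  \<open>f \<in> H\<^sub>n\<close>, so subtracting it inside the supremum raises every term by at least that amount.
\<close>

lemma integrable_mult_indicator_pred:
  fixes g :: "'a \<Rightarrow> real"
  assumes "integrable M g" and "Measurable.pred M P"
  shows "integrable M (\<lambda>\<omega>. g \<omega> * indicator {\<omega>. P \<omega>} \<omega>)"
proof (rule Bochner_Integration.integrable_bound[OF assms(1)])
  have [measurable]: "g \<in> borel_measurable M"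
    using assms(1) by (rule borel_measurable_integrable)
  show "(\<lambda>\<omega>. g \<omega> * indicator {\<omega>. P \<omega>} \<omega>) \<in> borel_measurable M"
    using assms(2) by measurable
qed (auto split: split_indicator)

lemma integral_diff_mult_indicator_le:
  fixes a g :: "'a \<Rightarrow> real"
  assumes a: "integrable M a" and g: "integrable M g" and P: "Measurable.pred M P"
  shows "(\<integral>\<omega>. (a \<omega> - g \<omega>) * indicator {\<omega>. P \<omega>} \<omega> \<partial>M)
    \<le> (\<integral>\<omega>. a \<omega> \<partial>M) - (\<integral>\<omega>. g \<omega> \<partial>M)
       + (\<integral>\<omega>. \<bar>a \<omega>\<bar> * indicator {\<omega>. \<not> P \<omega>} \<omega> \<partial>M)
       + (\<integral>\<omega>. \<bar>g \<omega>\<bar> * indicator {\<omega>. \<not> P \<omega>} \<omega> \<partial>M)"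
proof -
  have notP: "Measurable.pred M (\<lambda>\<omega>. \<not> P \<omega>)"
    using P by measurable
  have ia: "integrable M (\<lambda>\<omega>. \<bar>a \<omega>\<bar> * indicator {\<omega>. \<not> P \<omega>} \<omega>)"
    and ig: "integrable M (\<lambda>\<omega>. \<bar>g \<omega>\<bar> * indicator {\<omega>. \<not> P \<omega>} \<omega>)"
    using a g notP by (auto intro: integrable_mult_indicator_pred)
  have "(\<integral>\<omega>. (a \<omega> - g \<omega>) * indicator {\<omega>. P \<omega>} \<omega> \<partial>M)
      \<le> (\<integral>\<omega>. (a \<omega> - g \<omega>) + \<bar>a \<omega>\<bar> * indicator {\<omega>. \<not> P \<omega>} \<omega>
                + \<bar>g \<omega>\<bar> * indicator {\<omega>. \<not> P \<omega>} \<omega> \<partial>M)"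
    using a g ia ig P
    by (intro integral_mono integrable_mult_indicator_pred) (auto split: split_indicator)
  also have "\<dots> = (\<integral>\<omega>. a \<omega> \<partial>M) - (\<integral>\<omega>. g \<omega> \<partial>M)
       + (\<integral>\<omega>. \<bar>a \<omega>\<bar> * indicator {\<omega>. \<not> P \<omega>} \<omega> \<partial>M)
       + (\<integral>\<omega>. \<bar>g \<omega>\<bar> * indicator {\<omega>. \<not> P \<omega>} \<omega> \<partial>M)"
    using a g ia ig by simp
  finally show ?thesis .
qed

lemma average_integral_diff_mult_indicator_le:
  fixes a g :: "nat \<Rightarrow> 'a \<Rightarrow> real"
  assumes a: "\<And>t. t \<in> {1..n} \<Longrightarrow> integrable M (a t)"
    and g: "\<And>t. t \<in> {1..n} \<Longrightarrow> integrable M (g t)"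
    and P: "\<And>t. Measurable.pred M (P t)"
    and a_tail: "\<And>t. t \<in> {1..n} \<Longrightarrow> (\<integral>\<omega>. \<bar>a t \<omega>\<bar> * indicator {\<omega>. \<not> P t \<omega>} \<omega> \<partial>M) \<le> \<delta>"
    and g_tail: "\<And>t. t \<in> {1..n} \<Longrightarrow> (\<integral>\<omega>. \<bar>g t \<omega>\<bar> * indicator {\<omega>. \<not> P t \<omega>} \<omega> \<partial>M) \<le> \<delta>"
    and n: "n \<ge> 1"
  shows "(1 / real n) * (\<Sum>t = 1..n. \<integral>\<omega>. (a t \<omega> - g t \<omega>) * indicator {\<omega>. P t \<omega>} \<omega> \<partial>M)
    \<le> (1 / real n) * (\<Sum>t = 1..n. \<integral>\<omega>. a t \<omega> \<partial>M) - (1 / real n) * (\<Sum>t = 1..n. \<integral>\<omega>. g t \<omega> \<partial>M)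
       + 2 * \<delta>"
proof -
  have "(1 / real n) * (\<Sum>t = 1..n. \<integral>\<omega>. (a t \<omega> - g t \<omega>) * indicator {\<omega>. P t \<omega>} \<omega> \<partial>M)
      \<le> (1 / real n) * (\<Sum>t = 1..n. (\<integral>\<omega>. a t \<omega> \<partial>M) - (\<integral>\<omega>. g t \<omega> \<partial>M) + 2 * \<delta>)"
  proof (intro mult_left_mono sum_mono)
    fix t assume t: "t \<in> {1..n}"
    show "(\<integral>\<omega>. (a t \<omega> - g t \<omega>) * indicator {\<omega>. P t \<omega>} \<omega> \<partial>M)
        \<le> (\<integral>\<omega>. a t \<omega> \<partial>M) - (\<integral>\<omega>. g t \<omega> \<partial>M) + 2 * \<delta>"
      using integral_diff_mult_indicator_le[OF a[OF t] g[OF t] P[of t]] a_tail[OF t] g_tail[OF t]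
      by linarith
  qed simp
  also have "\<dots> = (1 / real n) * (\<Sum>t = 1..n. \<integral>\<omega>. a t \<omega> \<partial>M)
      - (1 / real n) * (\<Sum>t = 1..n. \<integral>\<omega>. g t \<omega> \<partial>M) + 2 * \<delta>"
    using n by (simp add: sum.distrib sum_subtractf field_simps)
  finally show ?thesis .
qed

lemma EQn_eq_average_integral:
  assumes "\<And>t. t \<in> {1..n} \<Longrightarrow> integrable M (loss Z l t f)"
  shows "EQn M Z l n f = (1 / real n) * (\<Sum>t = 1..n. \<integral>\<omega>. loss Z l t f \<omega> \<partial>M)"
  unfolding EQn_def Qn_def using assms by (simp add: integral_sum)

lemma semimetric_on_diff_le:
  assumes "semimetric_on S d" and "x \<in> S" "y \<in> S" "z \<in> S"
  shows "d x z - d z y \<le> d x y"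
  using assms unfolding semimetric_on_def by (metis diff_le_eq add.commute)

lemma excess_risk_gap_le:
  fixes R :: "'a \<Rightarrow> real"
  assumes d: "semimetric_on S d" and S: "f \<in> S" "f\<^sub>s \<in> S" "f\<^sub>0 \<in> S"
    and lower: "C\<^sub>1 * (d f f\<^sub>0)\<^sup>2 \<le> R f - R f\<^sub>0" and upper: "R f\<^sub>s - R f\<^sub>0 \<le> C\<^sub>2 * (d f\<^sub>s f\<^sub>0)\<^sup>2"
    and C: "0 \<le> C\<^sub>1" "0 \<le> C\<^sub>2"
    and close: "d f\<^sub>s f\<^sub>0 \<le> \<epsilon>" and far: "c * \<epsilon> \<le> d f f\<^sub>s" and c: "2 \<le> c"
  shows "R f\<^sub>s - R f \<le> (C\<^sub>2 - C\<^sub>1 * c\<^sup>2 / 4) * \<epsilon>\<^sup>2"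
proof -
  have d_nonneg: "0 \<le> d f\<^sub>s f\<^sub>0"
    using d S unfolding semimetric_on_def by blast
  have "c * \<epsilon> / 2 \<le> c * \<epsilon> - \<epsilon>"
    using mult_right_mono[OF c, of \<epsilon>] close d_nonneg by linarith
  also have "\<dots> \<le> d f f\<^sub>0"
    using semimetric_on_diff_le[OF d S(1,3,2)] far close by linarith
  finally have "(c * \<epsilon> / 2)\<^sup>2 \<le> (d f f\<^sub>0)\<^sup>2"
    using c close d_nonneg by (intro power_mono) auto
  moreover have "(d f\<^sub>s f\<^sub>0)\<^sup>2 \<le> \<epsilon>\<^sup>2"
    using close d_nonneg by (intro power_mono) auto
  ultimately have "C\<^sub>2 * (d f\<^sub>s f\<^sub>0)\<^sup>2 - C\<^sub>1 * (d f f\<^sub>0)\<^sup>2 \<le> C\<^sub>2 * \<epsilon>\<^sup>2 - C\<^sub>1 * (c * \<epsilon> / 2)\<^sup>2"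
    using C by (intro diff_mono mult_left_mono) auto
  then show ?thesis
    using lower upper by (simp add: power_mult_distrib field_simps)
qed

lemma SUP_ereal_le_SUP_minus:
  assumes "\<And>x. x \<in> A \<Longrightarrow> u x \<le> v x - K"
  shows "(SUP x\<in>A. ereal (u x)) \<le> (SUP x\<in>A. ereal (v x)) - ereal K"
proof (rule SUP_least)
  fix x assume "x \<in> A"
  then have "ereal (u x) \<le> ereal (v x) - ereal K"
    using assms by simp
  also have "\<dots> \<le> (SUP x\<in>A. ereal (v x)) - ereal K"
    using \<open>x \<in> A\<close> by (intro ereal_minus_mono SUP_upper) simp_all
  finally show "ereal (u x) \<le> (SUP x\<in>A. ereal (v x)) - ereal K" .
qed

theorem lemmaC1:
  fixes M :: "'w measure" and N :: "'z measure"
    and Z :: "nat \<Rightarrow> 'w \<Rightarrow> 'z"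
    and Mc :: "('z \<Rightarrow> real) set"
    and l :: "'z \<Rightarrow> real \<Rightarrow> real"
    and f0 :: "'z \<Rightarrow> real"
    and d :: "nat \<Rightarrow> ('z \<Rightarrow> real) \<Rightarrow> ('z \<Rightarrow> real) \<Rightarrow> real"
    and G H :: "nat \<Rightarrow> ('z \<Rightarrow> real) set"
    and eps :: "nat \<Rightarrow> real"
    and fstar :: "nat \<Rightarrow> 'z \<Rightarrow> real"
    and m :: "nat \<Rightarrow> 'z \<Rightarrow> real"
    and b :: "nat \<Rightarrow> real"
    and C1 C2 C3 c :: real
    and n :: nat
  assumes "prob_space M"
    and Z_meas: "\<And>t. Z t \<in> measurable M N"
    and Mc_borel: "Mc \<subseteq> borel_measurable N"
    and l_borel: "(\<lambda>(z, y). l z y) \<in> borel_measurable (N \<Otimes>\<^sub>M borel)"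
    and l_int: "\<And>t f. f \<in> Mc \<Longrightarrow> integrable M (loss Z l t f)"
    and f0: "f0 \<in> Mc"
    and f0_min: "\<And>k f. k \<ge> 1 \<Longrightarrow> f \<in> Mc \<Longrightarrow> EQn M Z l k f0 \<le> EQn M Z l k f"
    and d_semi: "\<And>k. semimetric_on Mc (d k)"
    and G_sub: "\<And>k. G k \<subseteq> Mc"
    and eps_pos: "\<And>k. eps k > 0"
    and a1: "\<And>k. fstar k \<in> G k \<and> d k (fstar k) f0 \<le> eps k"
    and C1: "C1 > 0" and C2: "C2 > 0"
    and a2: "\<And>k f. k \<ge> 1 \<Longrightarrow> f \<in> G k \<Longrightarrow>
               C1 * (d k f f0)\<^sup>2 \<le> EQn M Z l k f - EQn M Z l k f0 \<and>
               EQn M Z l k f - EQn M Z l k f0 \<le> C2 * (d k f f0)\<^sup>2"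
    and m_meas: "\<And>k. m k \<in> borel_measurable N"
    and m_nonneg: "\<And>k z. m k z \<ge> 0"
    and b_pos: "\<And>k. b k > 0"
    and C3: "C3 > 0"
    and a3: "\<And>k f t. k \<ge> 1 \<Longrightarrow> f \<in> G k \<Longrightarrow> t \<in> {1..k} \<Longrightarrow>
               (\<integral>\<omega>. \<bar>loss Z l t f \<omega>\<bar> * indicator {\<omega>. m k (Z t \<omega>) \<ge> b k} \<omega> \<partial>M)
                 \<le> C3 * (eps k)\<^sup>2"
    and c: "c \<ge> 2"
    and H_sub: "\<And>k. H k \<subseteq> G k"
    and H_far: "\<And>k f. f \<in> H k \<Longrightarrow> c * eps k \<le> d k f (fstar k)"
    and n: "n \<ge> 1"
  shows "\<forall>\<omega>\<in>space M.
    (SUP f\<in>H n. ereal ((1 / real n) * (\<Sum>t = 1..n.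
        (loss Z l t (fstar n) \<omega> - loss Z l t f \<omega>) * indicator {\<omega>. m n (Z t \<omega>) < b n} \<omega>)))
    \<le> (SUP f\<in>H n. ereal ((1 / real n) * (\<Sum>t = 1..n.
        (loss Z l t (fstar n) \<omega> - loss Z l t f \<omega>) * indicator {\<omega>. m n (Z t \<omega>) < b n} \<omega>
        - (\<integral>\<omega>'. (loss Z l t (fstar n) \<omega>' - loss Z l t f \<omega>') * indicator {\<omega>'. m n (Z t \<omega>') < b n} \<omega>' \<partial>M))))
      - ereal ((C1 * c\<^sup>2 / 4 - C2 - 2 * C3) * (eps n)\<^sup>2)"
proof -
  define K where "K = (C1 * c\<^sup>2 / 4 - C2 - 2 * C3) * (eps n)\<^sup>2"
  define P where "P t \<omega> \<longleftrightarrow> m n (Z t \<omega>) < b n" for t \<omega>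
  have fstar: "fstar n \<in> G n" "d n (fstar n) f0 \<le> eps n"
    using a1 by blast+
  have P_meas: "Measurable.pred M (P t)" for t
    using Z_meas m_meas unfolding P_def by measurable
  have expected_gain: "(1 / real n) * (\<Sum>t = 1..n.
      \<integral>\<omega>. (loss Z l t (fstar n) \<omega> - loss Z l t f \<omega>) * indicator {\<omega>. P t \<omega>} \<omega> \<partial>M) \<le> - K"
    if "f \<in> H n" for f
  proof -
    have f: "f \<in> G n" "f \<in> Mc" and fstar_Mc: "fstar n \<in> Mc"
      using that H_sub G_sub fstar by blast+
    have "(1 / real n) * (\<Sum>t = 1..n.
        \<integral>\<omega>. (loss Z l t (fstar n) \<omega> - loss Z l t f \<omega>) * indicator {\<omega>. P t \<omega>} \<omega> \<partial>M)
      \<le> EQn M Z l n (fstar n) - EQn M Z l n f + 2 * (C3 * (eps n)\<^sup>2)"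
      unfolding EQn_eq_average_integral[OF l_int[OF fstar_Mc]]
        EQn_eq_average_integral[OF l_int[OF f(2)]]
      using a3[OF n fstar(1)] a3[OF n f(1)] fstar_Mc f n
      by (intro average_integral_diff_mult_indicator_le[where a = "\<lambda>t. loss Z l t (fstar n)"
          and g = "\<lambda>t. loss Z l t f"] l_int P_meas) (auto simp: P_def not_less)
    also have "\<dots> \<le> - K"
      using excess_risk_gap_le[where R = "EQn M Z l n", OF d_semi[of n] f(2) fstar_Mc f0
          conjunct1[OF a2[OF n f(1)]] conjunct2[OF a2[OF n fstar(1)]]
          less_imp_le[OF C1] less_imp_le[OF C2] fstar(2) H_far[OF that] c]
      unfolding K_def by (simp add: algebra_simps)
    finally show ?thesis .
  qed
  show ?thesis
    using expected_gain unfolding P_def K_def sum_subtractf right_diff_distrib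
    by (intro ballI SUP_ereal_le_SUP_minus) (smt (verit))
qed

end
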